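(* Let $(\bar\alpha,\bar\beta)$ be a strict shifted pair of partitions and put $M=l(\bar\alpha)-l(\bar\beta)$. Define $g_1=0$ and, for $2\le i\le l(\bar\alpha)$, $g_i=(i-2)-\#\{j:\ \bar\beta_j\ge\bar\alpha_i\}$. Then every integer $t$ with $0\le t\le M-2$ occurs as some $g_i$, and setting $s_t=\min\{\bar\alpha_i:\ g_i=t\}$ we have $s_0\ge s_1\ge\cdots\ge s_{M-2}$.
   Context: A partition is a finite nonincreasing sequence of positive integers (possibly empty); $l(\lambda)$ is its number of parts. A pair of partitions $(\alpha,\beta)$ is strict shifted if $l(\alpha)>l(\beta)$ and $\alpha_{i+1}>\beta_i$ for $1\le i\le l(\beta)$. *)

theory Defs
  imports Main
begin

text \<open>A partition is a list of positive naturals in nonincreasing order.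
  Parts are 1-indexed in the paper: lambda_i = lam ! (i - 1).\<close>

definition is_partition :: "nat list \<Rightarrow> bool" where
  "is_partition lam \<longleftrightarrow> sorted_wrt (\<ge>) lam \<and> (\<forall>x\<in>set lam. 0 < x)"

definition part :: "nat list \<Rightarrow> nat \<Rightarrow> nat" where
  "part lam i = lam ! (i - 1)"

definition strict_shifted :: "nat list \<Rightarrow> nat list \<Rightarrow> bool" where
  "strict_shifted a b \<longleftrightarrow> is_partition a \<and> is_partition b \<and> length a > length b \<and>
     (\<forall>i. 1 \<le> i \<and> i \<le> length b \<longrightarrow> part a (i + 1) > part b i)"

definition gval :: "nat list \<Rightarrow> nat list \<Rightarrow> nat \<Rightarrow> int" where
  "gval a b i = (if i = 1 then 0
     else (int i - 2) - int (card {j. 1 \<le> j \<and> j \<le> length b \<and> part b j \<ge> part a i}))"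

definition sval :: "nat list \<Rightarrow> nat list \<Rightarrow> int \<Rightarrow> nat" where
  "sval a b t = Min {part a i | i. 1 \<le> i \<and> i \<le> length a \<and> gval a b i = t}"

end

theory Submission
  imports Defs
begin

text \<open>Along the parts of \<open>\<alpha>\<close> the sequence \<open>g\<close> rises by at most one per step, since \<open>i\<close> grows
  by one while the count of parts of \<open>\<beta>\<close> above \<open>\<alpha>\<^sub>i\<close> cannot shrink as \<open>\<alpha>\<^sub>i\<close> decreases.
  It starts at \<open>g\<^sub>1 = 0\<close> and ends at \<open>g\<^sub>l \<ge> l(\<alpha>) - 2 - l(\<beta>) = M - 2\<close>, so it takes every value
  in between, and it does so again to the right of any index where a smaller value is taken.
  Hence if \<open>s\<^sub>t = \<alpha>\<^sub>k\<close> with \<open>g\<^sub>k = t\<close>, some \<open>j \<ge> k\<close> has \<open>g\<^sub>j = t + 1\<close>, and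
  \<open>s\<^sub>t\<^sub>+\<^sub>1 \<le> \<alpha>\<^sub>j \<le> \<alpha>\<^sub>k = s\<^sub>t\<close>. Only the monotonicity of \<open>\<alpha>\<close> and \<open>l(\<alpha>) \<ge> 1\<close> are used.\<close>

lemma nat_intermed_int_val_upward:
  fixes f :: "nat \<Rightarrow> int"
  assumes "\<And>i. k \<le> i \<Longrightarrow> i < n \<Longrightarrow> f (Suc i) \<le> f i + 1"
    and "k \<le> n" and "f k \<le> t" and "t \<le> f n"
  shows "\<exists>j. k \<le> j \<and> j \<le> n \<and> f j = t"
  using assms
proof (induction n)
  case 0
  then show ?case by auto
next
  case (Suc n)
  show ?case
  proof (cases "k = Suc n \<or> t = f (Suc n)")
    case True
    then show ?thesis using Suc.prems by auto
  next
    case False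
    then have "k \<le> n" and "t < f (Suc n)" using Suc.prems by auto
    moreover have "f (Suc n) \<le> f n + 1" using Suc.prems(1) \<open>k \<le> n\<close> by simp
    ultimately have "t \<le> f n" by simp
    with Suc.IH Suc.prems \<open>k \<le> n\<close> obtain j where "k \<le> j" "j \<le> n" "f j = t" by auto
    then show ?thesis by (intro exI[of _ j]) simp
  qed
qed

lemma part_antimono:
  assumes "is_partition a" and "1 \<le> i" and "i \<le> k" and "k \<le> length a"
  shows "part a k \<le> part a i"
proof (cases "i = k")
  case False
  have "sorted_wrt (\<ge>) a" using assms(1) unfolding is_partition_def by simp
  then show ?thesis
    using False assms(2-4) unfolding part_def by (auto simp: sorted_wrt_iff_nth_less)
qed simp

lemma gval_Suc_le:
  assumes "is_partition a" and "1 \<le> i" and "i < length a"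
  shows "gval a b (Suc i) \<le> gval a b i + 1"
proof (cases "i = 1")
  case False
  have "part a (Suc i) \<le> part a i" using part_antimono assms by simp
  then have "card {j. 1 \<le> j \<and> j \<le> length b \<and> part a i \<le> part b j}
           \<le> card {j. 1 \<le> j \<and> j \<le> length b \<and> part a (Suc i) \<le> part b j}"
    by (intro card_mono) auto
  then show ?thesis using False assms(2) unfolding gval_def by simp
qed (simp add: gval_def)

lemma gval_ge:
  assumes "i \<noteq> 1"
  shows "gval a b i \<ge> int i - int (length b) - 2"
proof -
  have "card {j. 1 \<le> j \<and> j \<le> length b \<and> part a i \<le> part b j} \<le> card {1..length b}"
    by (intro card_mono) auto
  then show ?thesis using assms unfolding gval_def by simp
qed

lemma gval_last_ge: "gval a b (length a) \<ge> int (length a) - int (length b) - 2"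
  using gval_ge[of "length a"] by (cases "length a = 1") (auto simp: gval_def)

lemma gval_attains:
  assumes "is_partition a" and "1 \<le> k" and "k \<le> length a"
    and "gval a b k \<le> t" and "t \<le> int (length a) - int (length b) - 2"
  shows "\<exists>j. k \<le> j \<and> j \<le> length a \<and> gval a b j = t"
proof (rule nat_intermed_int_val_upward)
  show "gval a b (Suc i) \<le> gval a b i + 1" if "k \<le> i" and "i < length a" for i
    using gval_Suc_le assms(1,2) that by simp
  show "t \<le> gval a b (length a)" using gval_last_ge[of a b] assms(5) by simp
qed (use assms in simp_all)

lemma finite_parts_where: "finite {part a i | i. 1 \<le> i \<and> i \<le> length a \<and> P i}"
  by (rule finite_subset[of _ "part a ` {1..length a}"]) auto

lemma sval_le:
  assumes "1 \<le> j" and "j \<le> length a" and "gval a b j = t"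
  shows "sval a b t \<le> part a j"
  unfolding sval_def using assms by (intro Min_le finite_parts_where) auto

lemma sval_attained:
  assumes "1 \<le> j" and "j \<le> length a" and "gval a b j = t"
  obtains k where "1 \<le> k" and "k \<le> length a" and "gval a b k = t" and "sval a b t = part a k"
proof -
  let ?S = "{part a i | i. 1 \<le> i \<and> i \<le> length a \<and> gval a b i = t}"
  have "finite ?S" by (rule finite_parts_where)
  moreover have "?S \<noteq> {}" using assms by auto
  ultimately have "Min ?S \<in> ?S" by (rule Min_in)
  then obtain k where "1 \<le> k" "k \<le> length a" "gval a b k = t" "Min ?S = part a k" by blast
  then show ?thesis using that unfolding sval_def by blast
qed

theorem mainTheorem6:
  fixes a b :: "nat list"
  assumes "strict_shifted a b"
  defines "M \<equiv> int (length a) - int (length b)"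
  shows "(\<forall>t::int. 0 \<le> t \<and> t \<le> M - 2 \<longrightarrow>
            (\<exists>i. 1 \<le> i \<and> i \<le> length a \<and> gval a b i = t))
       \<and> (\<forall>t::int. 0 \<le> t \<and> t + 1 \<le> M - 2 \<longrightarrow> sval a b t \<ge> sval a b (t + 1))"
proof -
  have a: "is_partition a" and "1 \<le> length a"
    using assms(1) unfolding strict_shifted_def by auto
  have attains: "\<exists>i. 1 \<le> i \<and> i \<le> length a \<and> gval a b i = t" if "0 \<le> t" "t \<le> M - 2" for t
  proof -
    have "gval a b 1 \<le> t" using that(1) by (simp add: gval_def)
    then show ?thesis
      using gval_attains[OF a order.refl \<open>1 \<le> length a\<close>] that(2) unfolding M_def by blast
  qed
  have "sval a b (t + 1) \<le> sval a b t" if t: "0 \<le> t" "t + 1 \<le> M - 2" for t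
  proof -
    obtain i where "1 \<le> i" "i \<le> length a" "gval a b i = t" using attains t by force
    then obtain k where k: "1 \<le> k" "k \<le> length a" "gval a b k = t" "sval a b t = part a k"
      by (rule sval_attained)
    then obtain j where j: "k \<le> j" "j \<le> length a" "gval a b j = t + 1"
      using gval_attains[OF a k(1,2), of b "t + 1"] t(2) unfolding M_def by auto
    have "sval a b (t + 1) \<le> part a j" using sval_le j k(1) by simp
    also have "\<dots> \<le> part a k" using part_antimono[OF a k(1) j(1,2)] .
    finally show ?thesis using k(4) by simp
  qed
  with attains show ?thesis by blast
qed

end
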